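(* Let $\Theta$ be a subset of a Polish space with metric $d$, and let $\{P^\theta:\theta\in\Theta\}$ be probability measures on $(\Omega,\mathcal{F})$ such that $\theta\mapsto P^\theta$ is continuous in total variation: for every $\theta\in\Theta$ and $\varepsilon>0$ there is $\delta>0$ with $\sup_{A\in\mathcal{F}}|P^\theta(A)-P^{\theta'}(A)|<\varepsilon$ whenever $d(\theta,\theta')<\delta$. Then there exists a probability measure $\mathbb{P}$ which is a countable convex combination of measures $P^\theta$, $\theta\in\Theta$, such that $P^\theta\ll\mathbb{P}$ for all $\theta\in\Theta$.
   Context: $(\Omega,\mathcal{F})$ is a measurable space. A countable convex combination means $\sum_k\lambda_kP^{\theta_k}$ with $\theta_k\in\Theta$, $\lambda_k\ge0$, $\sum_k\lambda_k=1$. *)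

theory Defs
  imports "HOL-Probability.Probability"
begin

end

theory Submission
  imports Defs
begin

(* Separability gives a countable dense subset {\<theta>_k} of \<Theta>. Mixing the P^\<theta>_k with strictly
   positive (geometric) weights yields a probability Q whose null sets are exactly the sets null
   for every P^\<theta>_k. Continuity in total variation makes \<theta> \<mapsto> P^\<theta>(A) continuous on \<Theta>, so a
   set null for all P^\<theta>_k is null for every P^\<theta>, by density. *)

lemma continuous_constant_on_dense_subset:
  fixes f :: "'a::topological_space \<Rightarrow> 'b::t1_space"
  assumes f: "continuous_on S f" and "D \<subseteq> S" and "S \<subseteq> closure D"
    and const: "\<And>x. x \<in> D \<Longrightarrow> f x = a" and "x \<in> S"
  shows "f x = a"
proof -
  obtain C where "closed C" and C: "{x \<in> S. f x = a} = S \<inter> C"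
    using continuous_closedin_preimage_constant[OF f] closedin_closed by metis
  then have "closure D \<subseteq> C"
    using \<open>D \<subseteq> S\<close> const by (intro closure_minimal) auto
  with assms C show ?thesis by blast
qed

lemma sums_integral_measure_pmf_nat:
  fixes p :: "nat pmf" and f :: "nat \<Rightarrow> real"
  assumes "integrable (measure_pmf p) f"
  shows "(\<lambda>k. pmf p k * f k) sums (\<integral>k. f k \<partial>p)"
  using assms unfolding measure_pmf_eq_density
  by (simp add: integral_density integrable_density sums_integral_count_space_nat)

context
  fixes p :: "'i pmf" and N :: "'i \<Rightarrow> 'a measure" and M :: "'a measure"
  assumes prob_space_N: "\<And>i. prob_space (N i)" and sets_N: "\<And>i. sets (N i) = sets M"
begin

lemma measurable_pmf_kernel: "N \<in> measure_pmf p \<rightarrow>\<^sub>M subprob_algebra M"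
  by (auto simp: space_subprob_algebra sets_N prob_space_N prob_space_imp_subprob_space)

lemma sets_bind_pmf_kernel: "sets (measure_pmf p \<bind> N) = sets M"
  by (simp add: sets_N)

lemma prob_space_bind_pmf_kernel: "prob_space (measure_pmf p \<bind> N)"
  by (rule measure_pmf.prob_space_bind[OF _ measurable_pmf_kernel]) (simp add: prob_space_N)

lemma measure_bind_pmf_kernel:
  assumes "A \<in> sets M"
  shows "measure (measure_pmf p \<bind> N) A = (\<integral>i. measure (N i) A \<partial>p)"
  by (rule measure_pmf.measure_bind[OF measurable_pmf_kernel assms])

lemma integrable_measure_pmf_kernel: "integrable (measure_pmf p) (\<lambda>i. measure (N i) A)"
  by (rule measure_pmf.integrable_const_bound[where B=1])
     (simp_all add: prob_space.prob_le_1[OF prob_space_N])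

lemma null_sets_bind_pmf_kernel:
  "A \<in> null_sets (measure_pmf p \<bind> N) \<longleftrightarrow> A \<in> sets M \<and> (\<forall>i\<in>set_pmf p. A \<in> null_sets (N i))"
proof (cases "A \<in> sets M")
  case True
  then have "emeasure (measure_pmf p \<bind> N) A = (\<integral>\<^sup>+i. emeasure (N i) A \<partial>p)"
    by (intro emeasure_bind[OF _ measurable_pmf_kernel]) simp_all
  with True show ?thesis
    by (simp add: null_sets_def sets_N nn_integral_0_iff_AE AE_measure_pmf_iff)
qed (simp add: null_sets_def sets_bind_pmf_kernel)

end

lemma countable_mixture_of_prob_spaces:
  fixes N :: "nat \<Rightarrow> 'a measure"
  assumes prob_space_N: "\<And>k. prob_space (N k)" and sets_N: "\<And>k. sets (N k) = sets M"
  obtains Q and c :: "nat \<Rightarrow> real"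
  where "prob_space Q" "sets Q = sets M" "\<And>k. c k \<ge> 0" "c sums 1"
    and "\<And>A. A \<in> sets M \<Longrightarrow> (\<lambda>k. c k * measure (N k) A) sums measure Q A"
    and "\<And>A. A \<in> null_sets Q \<longleftrightarrow> A \<in> sets M \<and> (\<forall>k. A \<in> null_sets (N k))"
proof
  define p where "p = geometric_pmf (1/2)"
  show "prob_space (measure_pmf p \<bind> N)" "sets (measure_pmf p \<bind> N) = sets M"
    using prob_space_bind_pmf_kernel[where N=N, OF prob_space_N sets_N]
      sets_bind_pmf_kernel[where N=N, OF prob_space_N sets_N] by blast+
  show "A \<in> null_sets (measure_pmf p \<bind> N) \<longleftrightarrow> A \<in> sets M \<and> (\<forall>k. A \<in> null_sets (N k))" for A
    using null_sets_bind_pmf_kernel[where N=N, OF prob_space_N sets_N]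
    by (simp add: p_def set_pmf_geometric)
  show "(\<lambda>k. pmf p k * measure (N k) A) sums measure (measure_pmf p \<bind> N) A"
    if "A \<in> sets M" for A
    using sums_integral_measure_pmf_nat
        [OF integrable_measure_pmf_kernel[where N=N, OF prob_space_N sets_N]]
    by (simp add: measure_bind_pmf_kernel[where N=N, OF prob_space_N sets_N that])
  show "pmf p sums 1"
    using sums_integral_measure_pmf_nat[of p "\<lambda>_. 1"] by simp
qed simp

lemma abs_measure_diff_le_SUP:
  assumes "prob_space \<mu>" "prob_space \<nu>" "sets \<mu> = sets M" "sets \<nu> = sets M" "A \<in> sets M"
  shows "\<bar>measure \<mu> A - measure \<nu> A\<bar> \<le> (SUP B\<in>sets M. \<bar>measure \<mu> B - measure \<nu> B\<bar>)"
proof (rule cSUP_upper[OF \<open>A \<in> sets M\<close>], rule bdd_aboveI2)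
  fix B
  have "measure \<mu> B \<le> 1" "measure \<nu> B \<le> 1"
    using assms(1,2) by (simp_all add: prob_space.prob_le_1)
  then show "\<bar>measure \<mu> B - measure \<nu> B\<bar> \<le> 1"
    using measure_nonneg[of \<mu> B] measure_nonneg[of \<nu> B] unfolding abs_le_iff by linarith
qed

lemma tv_continuous_imp_continuous_on_measure:
  fixes \<Theta> :: "'b::metric_space set" and P :: "'b \<Rightarrow> 'a measure"
  assumes prob: "\<And>\<theta>. \<theta> \<in> \<Theta> \<Longrightarrow> prob_space (P \<theta>)"
    and sets_P: "\<And>\<theta>. \<theta> \<in> \<Theta> \<Longrightarrow> sets (P \<theta>) = sets M"
    and tv_cont: "\<forall>\<theta>\<in>\<Theta>. \<forall>\<epsilon>>0. \<exists>\<delta>>0. \<forall>\<theta>'\<in>\<Theta>. dist \<theta> \<theta>' < \<delta> \<longrightarrow>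
         (SUP A\<in>sets M. \<bar>measure (P \<theta>) A - measure (P \<theta>') A\<bar>) < \<epsilon>"
    and A: "A \<in> sets M"
  shows "continuous_on \<Theta> (\<lambda>\<theta>. measure (P \<theta>) A)"
  unfolding continuous_on_iff
proof (intro ballI allI impI)
  fix \<theta> and \<epsilon> :: real assume "\<theta> \<in> \<Theta>" "\<epsilon> > 0"
  then obtain \<delta> where "\<delta> > 0" and \<delta>: "\<forall>\<theta>'\<in>\<Theta>. dist \<theta> \<theta>' < \<delta> \<longrightarrow>
         (SUP A\<in>sets M. \<bar>measure (P \<theta>) A - measure (P \<theta>') A\<bar>) < \<epsilon>"
    using tv_cont by blast
  have "dist (measure (P \<theta>') A) (measure (P \<theta>) A) < \<epsilon>"
    if "\<theta>' \<in> \<Theta>" "dist \<theta>' \<theta> < \<delta>" for \<theta>'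
  proof -
    have "\<bar>measure (P \<theta>) A - measure (P \<theta>') A\<bar>
        \<le> (SUP B\<in>sets M. \<bar>measure (P \<theta>) B - measure (P \<theta>') B\<bar>)"
      using \<open>\<theta> \<in> \<Theta>\<close> that(1) by (intro abs_measure_diff_le_SUP prob sets_P A)
    also have "\<dots> < \<epsilon>"
      using \<delta> that by (simp add: dist_commute)
    finally show ?thesis
      by (simp add: dist_real_def abs_minus_commute)
  qed
  with \<open>\<delta> > 0\<close> show "\<exists>\<delta>>0. \<forall>\<theta>'\<in>\<Theta>. dist \<theta>' \<theta> < \<delta> \<longrightarrow>
      dist (measure (P \<theta>') A) (measure (P \<theta>) A) < \<epsilon>"
    by blast
qed

theorem lemma6p8:
  fixes M :: "'a measure" and \<Theta> :: "'b::polish_space set" and P :: "'b \<Rightarrow> 'a measure"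
  assumes nonempty: "\<Theta> \<noteq> {}"
    and prob: "\<And>\<theta>. \<theta> \<in> \<Theta> \<Longrightarrow> prob_space (P \<theta>)"
    and sets_P: "\<And>\<theta>. \<theta> \<in> \<Theta> \<Longrightarrow> sets (P \<theta>) = sets M"
    and tv_cont: "\<forall>\<theta>\<in>\<Theta>. \<forall>\<epsilon>>0. \<exists>\<delta>>0. \<forall>\<theta>'\<in>\<Theta>. dist \<theta> \<theta>' < \<delta> \<longrightarrow>
         (SUP A\<in>sets M. \<bar>measure (P \<theta>) A - measure (P \<theta>') A\<bar>) < \<epsilon>"
  shows "\<exists>Q c \<theta>s. prob_space Q \<and> sets Q = sets M \<and>
           (\<forall>k. \<theta>s k \<in> \<Theta>) \<and> (\<forall>k. c k \<ge> (0::real)) \<and> c sums 1 \<and>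
           (\<forall>A\<in>sets M. (\<lambda>k. c k * measure (P (\<theta>s k)) A) sums measure Q A) \<and>
           (\<forall>\<theta>\<in>\<Theta>. absolutely_continuous Q (P \<theta>))"
proof -
  obtain D where "countable D" "D \<subseteq> \<Theta>" "\<Theta> \<subseteq> closure D"
    using separable by blast
  define \<theta>s where "\<theta>s = from_nat_into D"
  have range_\<theta>s: "range \<theta>s = D"
    unfolding \<theta>s_def using \<open>countable D\<close> \<open>D \<subseteq> \<Theta>\<close> \<open>\<Theta> \<subseteq> closure D\<close> nonempty
    by (intro range_from_nat_into) auto
  then have \<theta>s: "\<theta>s k \<in> \<Theta>" for k
    using \<open>D \<subseteq> \<Theta>\<close> by auto
  obtain Q and c :: "nat \<Rightarrow> real"
    where Q: "prob_space Q" "sets Q = sets M" "\<And>k. c k \<ge> 0" "c sums 1"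
    "\<And>A. A \<in> sets M \<Longrightarrow> (\<lambda>k. c k * measure (P (\<theta>s k)) A) sums measure Q A"
    and null_sets_Q:
      "\<And>A. A \<in> null_sets Q \<longleftrightarrow> A \<in> sets M \<and> (\<forall>k. A \<in> null_sets (P (\<theta>s k)))"
    using countable_mixture_of_prob_spaces[of "\<lambda>k. P (\<theta>s k)" M] prob \<theta>s sets_P by blast
  have "measure (P \<theta>) A = 0" if "\<theta> \<in> \<Theta>" "A \<in> null_sets Q" for \<theta> A
  proof (rule continuous_constant_on_dense_subset[OF _ \<open>D \<subseteq> \<Theta>\<close> \<open>\<Theta> \<subseteq> closure D\<close> _ \<open>\<theta> \<in> \<Theta>\<close>])
    show "continuous_on \<Theta> (\<lambda>\<theta>. measure (P \<theta>) A)"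
      using that null_sets_Q
      by (intro tv_continuous_imp_continuous_on_measure[OF prob sets_P tv_cont]) auto
    show "measure (P \<theta>') A = 0" if "\<theta>' \<in> D" for \<theta>'
      using \<open>A \<in> null_sets Q\<close> \<open>\<theta>' \<in> D\<close> range_\<theta>s null_sets_Q
      by (auto simp: measure_def null_sets_def)
  qed
  then have "absolutely_continuous Q (P \<theta>)" if "\<theta> \<in> \<Theta>" for \<theta>
    using that null_sets_Q prob sets_P
    by (auto simp: absolutely_continuous_def null_sets_def prob_space_def
        finite_measure.emeasure_eq_measure)
  with Q \<theta>s show ?thesis
    by (intro exI[of _ Q] exI[of _ c] exI[of _ \<theta>s]) auto
qed

end
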